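(* Let $n\geq 3$ be a multiple of $3$. Then $\gamma_{sR}(C_3\vee C_n)=1$.
   Context: $C_n$ denotes the cycle on $n$ vertices. For a graph $G=(V,E)$ and $x\in V$, $N_G[x]=\{x\}\cup\{y: xy\in E\}$. A signed Roman dominating function (SRDF) on $G$ is a function $f:V\to\{-1,1,2\}$ such that (a) $\sum_{y\in N_G[x]}f(y)\geq 1$ for every $x\in V$, and (b) every vertex $x$ with $f(x)=-1$ is adjacent to at least one vertex $y$ with $f(y)=2$. The weight of $f$ is $\sum_{x\in V}f(x)$, and $\gamma_{sR}(G)$ is the minimum weight of an SRDF on $G$. The join $G_1\vee G_2$ of two graphs has vertex set $V(G_1)\cup V(G_2)$ (disjoint union) and edge set $E(G_1)\cup E(G_2)\cup\{uv: u\in V(G_1), v\in V(G_2)\}$. *)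

theory Defs
  imports Main
begin

text \<open>A finite simple graph is represented by a vertex set V and a symmetric,
irreflexive adjacency relation E (only its restriction to V matters).\<close>

definition closed_nbhd :: "'a set \<Rightarrow> ('a \<Rightarrow> 'a \<Rightarrow> bool) \<Rightarrow> 'a \<Rightarrow> 'a set" where
  "closed_nbhd V E x = {x} \<union> {y \<in> V. E x y}"

definition is_SRDF :: "'a set \<Rightarrow> ('a \<Rightarrow> 'a \<Rightarrow> bool) \<Rightarrow> ('a \<Rightarrow> int) \<Rightarrow> bool" where
  "is_SRDF V E f \<longleftrightarrow>
     (\<forall>x\<in>V. f x \<in> {-1, 1, 2}) \<and>
     (\<forall>x\<in>V. (\<Sum>y\<in>closed_nbhd V E x. f y) \<ge> 1) \<and>
     (\<forall>x\<in>V. f x = -1 \<longrightarrow> (\<exists>y\<in>V. E x y \<and> f y = 2))"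

definition weight :: "'a set \<Rightarrow> ('a \<Rightarrow> int) \<Rightarrow> int" where
  "weight V f = (\<Sum>x\<in>V. f x)"

definition gamma_sR :: "'a set \<Rightarrow> ('a \<Rightarrow> 'a \<Rightarrow> bool) \<Rightarrow> int" where
  "gamma_sR V E = Min {weight V f | f. is_SRDF V E f}"

definition cycle_V :: "nat \<Rightarrow> nat set" where
  "cycle_V n = {0..<n}"

definition cycle_E :: "nat \<Rightarrow> nat \<Rightarrow> nat \<Rightarrow> bool" where
  "cycle_E n i j \<longleftrightarrow> i < n \<and> j < n \<and> (j = (i + 1) mod n \<or> i = (j + 1) mod n)"

definition join_V :: "'a set \<Rightarrow> 'b set \<Rightarrow> ('a + 'b) set" where
  "join_V V1 V2 = V1 <+> V2"

fun join_E :: "('a \<Rightarrow> 'a \<Rightarrow> bool) \<Rightarrow> ('b \<Rightarrow> 'b \<Rightarrow> bool) \<Rightarrow> ('a + 'b) \<Rightarrow> ('a + 'b) \<Rightarrow> bool" where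
  "join_E E1 E2 (Inl u) (Inl v) = E1 u v"
| "join_E E1 E2 (Inr u) (Inr v) = E2 u v"
| "join_E E1 E2 (Inl u) (Inr v) = True"
| "join_E E1 E2 (Inr u) (Inl v) = True"

end

theory Submission
  imports Defs
begin

text \<open>Every vertex of \<open>C\<^sub>3\<close> is universal in \<open>C\<^sub>3 \<or> C\<^sub>n\<close>, so the weight of any SRDF is a
closed-neighbourhood sum and hence at least 1. Conversely, put \<open>-1, 1, 1\<close> on the triangle and
repeat \<open>2, -1, -1\<close> around \<open>C\<^sub>n\<close> (possible as \<open>3 dvd n\<close>): every closed neighbourhood of the
cycle then sums to 0, so every closed neighbourhood of the join sums to 1, which is also the
total weight.\<close>

lemma weight_ge_1_if_universal:
  assumes "is_SRDF V E f" and "u \<in> V" and "closed_nbhd V E u = V"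
  shows "weight V f \<ge> 1"
  using assms unfolding is_SRDF_def weight_def by metis

lemma weight_le_if_SRDF:
  assumes "is_SRDF V E f"
  shows "weight V f \<le> 2 * int (card V)"
proof -
  have "(\<Sum>x\<in>V. f x) \<le> (\<Sum>x\<in>V. 2)"
    by (rule sum_mono) (use assms in \<open>auto simp: is_SRDF_def\<close>)
  then show ?thesis unfolding weight_def by simp
qed

lemma gamma_sR_eq_1_if_universal:
  assumes "finite V" and "u \<in> V" and "closed_nbhd V E u = V"
    and "is_SRDF V E f" and "weight V f = 1"
  shows "gamma_sR V E = 1"
proof -
  let ?W = "{weight V g | g. is_SRDF V E g}"
  have "?W \<subseteq> {1..2 * int (card V)}"
    using weight_ge_1_if_universal[OF _ assms(2,3)] weight_le_if_SRDF by auto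
  then have "finite ?W" by (rule finite_subset) simp
  then show ?thesis
    unfolding gamma_sR_def
    by (rule Min_eqI) (use assms weight_ge_1_if_universal in auto)
qed

lemma closed_nbhd_join_Inl:
  "closed_nbhd (join_V V1 V2) (join_E E1 E2) (Inl a) = closed_nbhd V1 E1 a <+> V2"
  by (auto simp: closed_nbhd_def join_V_def elim: PlusE)

lemma closed_nbhd_join_Inr:
  "closed_nbhd (join_V V1 V2) (join_E E1 E2) (Inr b) = V1 <+> closed_nbhd V2 E2 b"
  by (auto simp: closed_nbhd_def join_V_def elim: PlusE)

lemma closed_nbhd_join_Inl_universal:
  assumes "closed_nbhd V1 E1 a = V1"
  shows "closed_nbhd (join_V V1 V2) (join_E E1 E2) (Inl a) = join_V V1 V2"
  by (subst closed_nbhd_join_Inl) (simp add: assms join_V_def)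

lemma cycle_V_3: "cycle_V 3 = {0, 1, 2}"
  unfolding cycle_V_def by auto

lemma closed_nbhd_triangle:
  assumes "a < 3"
  shows "closed_nbhd (cycle_V 3) (cycle_E 3) a = cycle_V 3"
proof -
  have "a = 0 \<or> a = 1 \<or> a = 2" using assms by auto
  then show ?thesis unfolding closed_nbhd_def cycle_E_def cycle_V_3 by auto
qed

lemma cycle_pred_iff:
  fixes i j n :: nat
  assumes "i < n" and "j < n"
  shows "i = (j + 1) mod n \<longleftrightarrow> j = (i + n - 1) mod n"
proof -
  have pred: "(i + n - 1) mod n = (if i = 0 then n - 1 else i - 1)"
  proof (cases "i = 0")
    case False
    then have "i + n - 1 = (i - 1) + n" by simp
    then show ?thesis using False assms(1) by (simp only: mod_add_self2) simp
  qed (use assms in simp)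
  have succ: "(j + 1) mod n = (if j = n - 1 then 0 else j + 1)"
    using assms by (cases "j = n - 1") auto
  show ?thesis
    unfolding pred succ using assms by (cases "i = 0"; cases "j = n - 1") auto
qed

lemma closed_nbhd_cycle:
  assumes "i < n"
  shows "closed_nbhd (cycle_V n) (cycle_E n) i = {(i + n - 1) mod n, i, (i + 1) mod n}"
  using assms cycle_pred_iff[OF assms] unfolding closed_nbhd_def cycle_V_def cycle_E_def
  by auto

definition every_third :: "nat \<Rightarrow> int" where
  "every_third i = (if i mod 3 = 0 then 2 else -1)"

lemma every_third_consecutive: "every_third i + every_third (i + 1) + every_third (i + 2) = 0"
proof -
  have "i mod 3 = 0 \<and> (i + 1) mod 3 = 1 \<and> (i + 2) mod 3 = 2 \<or>
        i mod 3 = 1 \<and> (i + 1) mod 3 = 2 \<and> (i + 2) mod 3 = 0 \<or>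
        i mod 3 = 2 \<and> (i + 1) mod 3 = 0 \<and> (i + 2) mod 3 = 1" by presburger
  then show ?thesis unfolding every_third_def by auto
qed

lemma sum_every_third:
  assumes "3 dvd n"
  shows "(\<Sum>i<n. every_third i) = 0"
proof -
  have "(\<Sum>i<n. every_third i) = (\<Sum>m<n div 3. \<Sum>i\<in>{m * 3..<m * 3 + 3}. every_third i)"
    using sum.nat_group[of every_third 3 "n div 3"] assms by simp
  also have "\<dots> = 0"
  proof (rule sum.neutral, rule ballI)
    fix m :: nat
    have "{m * 3..<m * 3 + 3} = {m * 3, m * 3 + 1, m * 3 + 2}" by auto
    then show "(\<Sum>i\<in>{m * 3..<m * 3 + 3}. every_third i) = 0"
      using every_third_consecutive[of "m * 3"] by simp
  qed
  finally show ?thesis .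
qed

lemma sum_every_third_closed_nbhd_cycle:
  assumes "3 dvd n" and "i < n"
  shows "(\<Sum>j\<in>closed_nbhd (cycle_V n) (cycle_E n) i. every_third j) = 0"
proof -
  define p q where "p = (i + n - 1) mod n" and "q = (i + 1) mod n"
  have "n \<ge> 3" using assms by auto
  then have "i + n - 1 = (i + 2) + (n - 3)" and "3 dvd n - 3"
    using assms(1) by (simp_all add: dvd_diff_nat)
  then have "(i + n - 1) mod 3 = (i + 2) mod 3"
    by (metis dvd_imp_mod_0 mod_add_right_eq add_0_right)
  then have p_mod: "p mod 3 = (i + 2) mod 3" and q_mod: "q mod 3 = (i + 1) mod 3"
    unfolding p_def q_def using assms(1) by (simp_all add: mod_mod_cancel)
  then have "p \<noteq> i" "q \<noteq> i" "p \<noteq> q" by (auto simp: mod_Suc split: if_splits)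
  moreover have "every_third p + every_third i + every_third q = 0"
    using every_third_consecutive[of i] p_mod q_mod unfolding every_third_def by simp
  ultimately show ?thesis
    unfolding closed_nbhd_cycle[OF assms(2)] p_def[symmetric] q_def[symmetric] by simp
qed

lemma every_third_dominated:
  assumes "3 dvd n" and "i < n" and "every_third i = -1"
  shows "\<exists>j<n. cycle_E n i j \<and> every_third j = 2"
proof (cases "i mod 3 = 1")
  case True
  then have "i \<ge> 1" by (cases i) auto
  then have "cycle_E n i (i - 1)" using assms(2) unfolding cycle_E_def by simp
  moreover have "(i - 1) mod 3 = 0" using True \<open>i \<ge> 1\<close> by presburger
  ultimately show ?thesis using assms(2) by (intro exI[of _ "i - 1"]) (simp add: every_third_def)
next
  case False
  with assms(3) have "(i + 1) mod 3 = 0" unfolding every_third_def by presburger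
  then have "(i + 1) mod n mod 3 = 0" using assms(1) by (simp add: mod_mod_cancel)
  moreover have "cycle_E n i ((i + 1) mod n)" using assms(2) unfolding cycle_E_def by simp
  ultimately show ?thesis using assms(2)
    by (intro exI[of _ "(i + 1) mod n"]) (simp add: every_third_def)
qed

definition triangle_cycle_srdf :: "nat + nat \<Rightarrow> int" where
  "triangle_cycle_srdf = case_sum (\<lambda>a. if a = 0 then -1 else 1) every_third"

lemma sum_triangle_cycle_srdf:
  assumes "finite A"
  shows "(\<Sum>x\<in>cycle_V 3 <+> A. triangle_cycle_srdf x) = 1 + (\<Sum>i\<in>A. every_third i)"
  using assms by (simp add: sum.Plus cycle_V_3 triangle_cycle_srdf_def comp_def)

lemma weight_triangle_cycle_srdf:
  assumes "3 dvd n"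
  shows "weight (join_V (cycle_V 3) (cycle_V n)) triangle_cycle_srdf = 1"
  using sum_triangle_cycle_srdf[of "cycle_V n"] sum_every_third[OF assms]
  unfolding weight_def join_V_def cycle_V_def by (simp add: atLeast0LessThan)

lemma is_SRDF_triangle_cycle_srdf:
  assumes "3 dvd n" and "n > 0"
  shows "is_SRDF (join_V (cycle_V 3) (cycle_V n)) (join_E (cycle_E 3) (cycle_E n)) triangle_cycle_srdf"
    (is "is_SRDF ?V ?E ?f")
  unfolding is_SRDF_def
proof (intro conjI ballI impI)
  fix x assume "x \<in> ?V"
  then show "?f x \<in> {-1, 1, 2}"
    by (auto simp: triangle_cycle_srdf_def every_third_def split: sum.splits)
next
  fix x assume x: "x \<in> ?V"
  show "(\<Sum>y\<in>closed_nbhd ?V ?E x. ?f y) \<ge> 1"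
  proof (cases x)
    case (Inl a)
    with x have "a < 3" by (auto simp: join_V_def cycle_V_def)
    then have "closed_nbhd ?V ?E x = ?V"
      using Inl by (simp add: closed_nbhd_join_Inl_universal closed_nbhd_triangle)
    then show ?thesis using weight_triangle_cycle_srdf[OF assms(1)] by (simp add: weight_def)
  next
    case (Inr i)
    with x have "i < n" by (auto simp: join_V_def cycle_V_def)
    then show ?thesis
      using Inr sum_every_third_closed_nbhd_cycle[OF assms(1)]
      by (simp add: closed_nbhd_join_Inr sum_triangle_cycle_srdf closed_nbhd_cycle)
  qed
next
  fix x assume x: "x \<in> ?V" and "?f x = -1"
  show "\<exists>y\<in>?V. ?E x y \<and> ?f y = 2"
  proof (cases x)
    case (Inl a)
    have "Inr 0 \<in> ?V" using assms by (auto simp: join_V_def cycle_V_def)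
    then show ?thesis
      using Inl by (intro bexI[of _ "Inr 0"]) (simp_all add: triangle_cycle_srdf_def every_third_def)
  next
    case (Inr i)
    with x have "i < n" by (auto simp: join_V_def cycle_V_def)
    moreover have "every_third i = -1" using Inr \<open>?f x = -1\<close> by (simp add: triangle_cycle_srdf_def)
    ultimately obtain j where "j < n" "cycle_E n i j" "every_third j = 2"
      using every_third_dominated[OF assms(1)] by blast
    then show ?thesis
      using Inr by (intro bexI[of _ "Inr j"]) (auto simp: triangle_cycle_srdf_def join_V_def cycle_V_def)
  qed
qed

theorem mainTheorem4:
  fixes n :: nat
  assumes "n \<ge> 3" and "3 dvd n"
  shows "gamma_sR (join_V (cycle_V 3) (cycle_V n)) (join_E (cycle_E 3) (cycle_E n)) = 1"
proof (rule gamma_sR_eq_1_if_universal)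
  show "finite (join_V (cycle_V 3) (cycle_V n))"
    by (simp add: join_V_def cycle_V_def)
  show "Inl 0 \<in> join_V (cycle_V 3) (cycle_V n)"
    by (auto simp: join_V_def cycle_V_def)
  show "closed_nbhd (join_V (cycle_V 3) (cycle_V n)) (join_E (cycle_E 3) (cycle_E n)) (Inl 0)
      = join_V (cycle_V 3) (cycle_V n)"
    by (simp add: closed_nbhd_join_Inl_universal closed_nbhd_triangle)
  show "is_SRDF (join_V (cycle_V 3) (cycle_V n)) (join_E (cycle_E 3) (cycle_E n)) triangle_cycle_srdf"
    using is_SRDF_triangle_cycle_srdf assms by simp
  show "weight (join_V (cycle_V 3) (cycle_V n)) triangle_cycle_srdf = 1"
    using weight_triangle_cycle_srdf[OF assms(2)] .
qed

end
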